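(* Let $A$ be a functionally continuous normed algebra. Then the following are equivalent: (1) the topology of $A$ is defined by a uniform norm, i.e. a norm $\|\cdot\|$ satisfying $\|x^2\|=\|x\|^2$ for all $x\in A$ (so $A$ is a uniform normed algebra); (2) $A$ has a largest closed, idempotent, absolutely convex, bounded subset, i.e. a closed, idempotent, absolutely convex, bounded subset containing every closed, idempotent, absolutely convex, bounded subset of $A$.
   Context: All algebras are complex, commutative and have a unit. A normed algebra is an algebra with a submultiplicative norm. For a topological algebra $A$, $M^*(A)$ is the set of nonzero multiplicative linear functionals and $M(A)$ the set of nonzero continuous ones; $A$ is functionally continuous if $M^*(A)=M(A)$. A subset $S$ of an algebra is idempotent if $S\cdot S\subseteq S$, i.e. $xy\in S$ for all $x,y\in S$. Bounded means bounded in the normed (topological vector space) sense. *)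

theory Defs
  imports Complex_Main
begin

text \<open>A complex commutative unital algebra is modelled by a type of class comm_ring_1
  (ring structure, unit, 0 \<noteq> 1) together with an explicit complex scalar multiplication sm.\<close>

definition complex_algebra :: "(complex \<Rightarrow> 'a::comm_ring_1 \<Rightarrow> 'a) \<Rightarrow> bool" where
  "complex_algebra sm \<longleftrightarrow>
     (\<forall>a x y. sm a (x + y) = sm a x + sm a y) \<and>
     (\<forall>a b x. sm (a + b) x = sm a x + sm b x) \<and>
     (\<forall>a b x. sm (a * b) x = sm a (sm b x)) \<and>
     (\<forall>x. sm 1 x = x) \<and>
     (\<forall>a x y. sm a (x * y) = sm a x * y)"

definition vs_norm :: "(complex \<Rightarrow> 'a::comm_ring_1 \<Rightarrow> 'a) \<Rightarrow> ('a \<Rightarrow> real) \<Rightarrow> bool" where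
  "vs_norm sm N \<longleftrightarrow>
     (\<forall>x. 0 \<le> N x) \<and> (\<forall>x. N x = 0 \<longleftrightarrow> x = 0) \<and>
     (\<forall>x y. N (x + y) \<le> N x + N y) \<and>
     (\<forall>a x. N (sm a x) = cmod a * N x)"

definition normed_algebra :: "(complex \<Rightarrow> 'a::comm_ring_1 \<Rightarrow> 'a) \<Rightarrow> ('a \<Rightarrow> real) \<Rightarrow> bool" where
  "normed_algebra sm N \<longleftrightarrow> complex_algebra sm \<and> vs_norm sm N \<and>
     (\<forall>x y. N (x * y) \<le> N x * N y)"

definition norm_open :: "('a::comm_ring_1 \<Rightarrow> real) \<Rightarrow> 'a set \<Rightarrow> bool" where
  "norm_open N U \<longleftrightarrow> (\<forall>x\<in>U. \<exists>e>0. \<forall>y. N (y - x) < e \<longrightarrow> y \<in> U)"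

definition norm_closed :: "('a::comm_ring_1 \<Rightarrow> real) \<Rightarrow> 'a set \<Rightarrow> bool" where
  "norm_closed N S \<longleftrightarrow> norm_open N (- S)"

definition norm_bounded :: "('a::comm_ring_1 \<Rightarrow> real) \<Rightarrow> 'a set \<Rightarrow> bool" where
  "norm_bounded N S \<longleftrightarrow> (\<exists>C. \<forall>x\<in>S. N x \<le> C)"

definition idempotent_set :: "'a::comm_ring_1 set \<Rightarrow> bool" where
  "idempotent_set S \<longleftrightarrow> (\<forall>x\<in>S. \<forall>y\<in>S. x * y \<in> S)"

definition absolutely_convex :: "(complex \<Rightarrow> 'a::comm_ring_1 \<Rightarrow> 'a) \<Rightarrow> 'a set \<Rightarrow> bool" where
  "absolutely_convex sm S \<longleftrightarrow>
     (\<forall>x\<in>S. \<forall>y\<in>S. \<forall>a b. cmod a + cmod b \<le> 1 \<longrightarrow> sm a x + sm b y \<in> S)"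

definition mult_lin_functional :: "(complex \<Rightarrow> 'a::comm_ring_1 \<Rightarrow> 'a) \<Rightarrow> ('a \<Rightarrow> complex) \<Rightarrow> bool" where
  "mult_lin_functional sm \<phi> \<longleftrightarrow>
     (\<forall>x y. \<phi> (x + y) = \<phi> x + \<phi> y) \<and> (\<forall>a x. \<phi> (sm a x) = a * \<phi> x) \<and>
     (\<forall>x y. \<phi> (x * y) = \<phi> x * \<phi> y) \<and> (\<exists>x. \<phi> x \<noteq> 0)"

definition norm_continuous :: "('a::comm_ring_1 \<Rightarrow> real) \<Rightarrow> ('a \<Rightarrow> complex) \<Rightarrow> bool" where
  "norm_continuous N \<phi> \<longleftrightarrow>
     (\<forall>x. \<forall>e>0. \<exists>d>0. \<forall>y. N (y - x) < d \<longrightarrow> cmod (\<phi> y - \<phi> x) < e)"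

definition functionally_continuous :: "(complex \<Rightarrow> 'a::comm_ring_1 \<Rightarrow> 'a) \<Rightarrow> ('a \<Rightarrow> real) \<Rightarrow> bool" where
  "functionally_continuous sm N \<longleftrightarrow> (\<forall>\<phi>. mult_lin_functional sm \<phi> \<longrightarrow> norm_continuous N \<phi>)"

definition uniform_norm :: "(complex \<Rightarrow> 'a::comm_ring_1 \<Rightarrow> 'a) \<Rightarrow> ('a \<Rightarrow> real) \<Rightarrow> bool" where
  "uniform_norm sm M \<longleftrightarrow> vs_norm sm M \<and> (\<forall>x. M (x * x) = (M x)\<^sup>2)"

end

theory Submission
  imports Defs
begin

text \<open>If a uniform norm M defines the topology, it is equivalent to the submultiplicative norm,
  and repeated squaring (\<open>M (x ^ 2 ^ n) = M x ^ 2 ^ n\<close>) turns the bounded multiplicativity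
  defect into submultiplicativity; its closed unit ball is then the largest closed bounded idempotent
  disc, because the powers \<open>x ^ 2 ^ n\<close> of an element of a bounded idempotent set stay bounded.
  Conversely, the largest such disc B contains the closed unit ball and is bounded, so its Minkowski
  functional is an equivalent norm. Idempotence of B makes this norm square-submultiplicative, and
  B is closed under square roots: if \<open>y * y \<in> B\<close>, the closed absolutely convex hull of the powers
  of y is bounded and idempotent, hence contained in B. This gives the reverse inequality.\<close>

locale complex_alg =
  fixes sm :: "complex \<Rightarrow> 'a::comm_ring_1 \<Rightarrow> 'a"
  assumes complex_algebra: "complex_algebra sm"
begin

lemma scale_add_right: "sm a (x + y) = sm a x + sm a y"
  and scale_add_left: "sm (a + b) x = sm a x + sm b x"
  and scale_scale: "sm a (sm b x) = sm (a * b) x"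
  and scale_one: "sm 1 x = x"
  and scale_mult_left: "sm a x * y = sm a (x * y)"
  using complex_algebra unfolding complex_algebra_def by simp_all

lemma scale_mult_right: "x * sm a y = sm a (x * y)"
  by (metis mult.commute scale_mult_left)

lemma scale_mult_scale: "sm a x * sm b y = sm (a * b) (x * y)"
  by (simp add: scale_mult_left scale_mult_right scale_scale mult.commute)

lemma scale_zero_left: "sm 0 x = 0"
  using scale_add_left[of 0 0 x] by simp

lemma scale_zero_right: "sm a 0 = 0"
  using scale_add_right[of a 0 0] by simp

lemma scale_minus_right: "sm a (- x) = - sm a x"
  by (metis add.right_inverse add_eq_0_iff scale_add_right scale_zero_right)

lemma scale_diff_right: "sm a (x - y) = sm a x - sm a y"
  using scale_add_right[of a x "- y"] by (simp add: scale_minus_right)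

lemma scale_minus_one: "sm (- 1) x = - x"
  by (metis add.inverse_unique add.right_inverse scale_add_left scale_one scale_zero_left)

end

locale algebra_norm = complex_alg +
  fixes P :: "'a::comm_ring_1 \<Rightarrow> real"
  assumes vs_norm: "vs_norm sm P"
begin

lemma nonneg: "0 \<le> P x"
  and eq_0_iff: "P x = 0 \<longleftrightarrow> x = 0"
  and triangle: "P (x + y) \<le> P x + P y"
  and scale: "P (sm a x) = cmod a * P x"
  using vs_norm unfolding vs_norm_def by blast+

lemma zero [simp]: "P 0 = 0"
  by (simp add: eq_0_iff)

lemma scale_of_real: "0 \<le> r \<Longrightarrow> P (sm (of_real r) x) = r * P x"
  by (simp add: scale)

lemma minus_commute: "P (x - y) = P (y - x)"
  using scale[of "- 1" "x - y"] by (simp add: scale_minus_one)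

lemma triangle_diff: "P y \<le> P x + P (y - x)"
  using triangle[of x "y - x"] by simp

lemma open_less: "norm_open P {y. P y < c}"
  unfolding norm_open_def
proof (intro ballI exI conjI allI impI)
  fix x y assume "x \<in> {y. P y < c}" "P (y - x) < c - P x"
  then show "y \<in> {y. P y < c}" using triangle_diff[where x = x and y = y] by simp
qed simp

lemma open_greater: "norm_open P {y. c < P y}"
  unfolding norm_open_def
proof (intro ballI exI conjI allI impI)
  fix x y assume "x \<in> {y. c < P y}" "P (y - x) < P x - c"
  then show "y \<in> {y. c < P y}" using triangle_diff[where x = y and y = x] minus_commute[of y x] by simp
qed simp

lemma closed_atMost: "norm_closed P {y. P y \<le> c}"
proof -
  have "- {y. P y \<le> c} = {y. c < P y}" by auto
  then show ?thesis unfolding norm_closed_def using open_greater by simp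
qed

lemma absolutely_convex_atMost:
  assumes "0 \<le> c"
  shows "absolutely_convex sm {y. P y \<le> c}"
  unfolding absolutely_convex_def
proof (intro ballI allI impI, simp)
  fix x y a b assume le: "P x \<le> c" "P y \<le> c" "cmod a + cmod b \<le> 1"
  have "P (sm a x + sm b y) \<le> cmod a * P x + cmod b * P y"
    using triangle[of "sm a x" "sm b y"] by (simp add: scale)
  also have "\<dots> \<le> (cmod a + cmod b) * c"
    using le by (simp add: distrib_right add_mono mult_left_mono)
  also have "\<dots> \<le> c" using le assms by (simp add: mult_left_le_one_le)
  finally show "P (sm a x + sm b y) \<le> c" .
qed

lemma dominated_if_open_ball:
  assumes Q: "algebra_norm sm Q" and "norm_open Q {y. P y < 1}"
  shows "\<exists>c>0. \<forall>x. P x \<le> c * Q x"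
proof -
  interpret Q: algebra_norm sm Q by (fact Q)
  have "0 \<in> {y. P y < 1}" by simp
  then obtain e where "e > 0" "\<forall>y. Q (y - 0) < e \<longrightarrow> y \<in> {y. P y < 1}"
    using assms(2) unfolding norm_open_def by blast
  then have e: "e > 0" "\<And>y. Q y < e \<Longrightarrow> P y < 1" by auto
  have "P x \<le> 2 / e * Q x" for x
  proof (cases "x = 0")
    case False
    then have Qx: "Q x > 0" using Q.nonneg[of x] Q.eq_0_iff[of x] by linarith
    define r where "r = e / (2 * Q x)"
    have r: "r > 0" using Qx e by (simp add: r_def)
    have "Q (sm (of_real r) x) = r * Q x" using r by (simp add: Q.scale_of_real)
    also have "\<dots> = e / 2" using Qx by (simp add: r_def)
    finally have "Q (sm (of_real r) x) < e" using e by simp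
    then have "P (sm (of_real r) x) < 1" by (rule e(2))
    then have "r * P x < 1" using r by (simp add: scale_of_real)
    then show ?thesis using Qx e by (simp add: r_def field_simps)
  qed simp
  then show ?thesis using e by (intro exI[of _ "2 / e"]) auto
qed

end

lemma norm_open_transfer:
  assumes "c > 0" "\<And>x. P x \<le> c * Q x" "norm_open P U"
  shows "norm_open Q U"
  unfolding norm_open_def
proof
  fix x assume "x \<in> U"
  then obtain e where e: "e > 0" "\<And>y. P (y - x) < e \<Longrightarrow> y \<in> U"
    using assms(3) unfolding norm_open_def by blast
  have "y \<in> U" if "Q (y - x) < e / c" for y
    using e(2) assms(1) assms(2)[of "y - x"] that by (simp add: field_simps)
  then show "\<exists>e>0. \<forall>y. Q (y - x) < e \<longrightarrow> y \<in> U"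
    using e(1) assms(1) by (intro exI[of _ "e / c"]) auto
qed

lemma same_norm_topology_iff_equivalent:
  assumes P: "algebra_norm sm P" and Q: "algebra_norm sm Q"
  shows "(\<forall>U. norm_open P U \<longleftrightarrow> norm_open Q U) \<longleftrightarrow>
    (\<exists>c>0. \<forall>x. P x \<le> c * Q x) \<and> (\<exists>c>0. \<forall>x. Q x \<le> c * P x)"
proof
  assume "\<forall>U. norm_open P U \<longleftrightarrow> norm_open Q U"
  then show "(\<exists>c>0. \<forall>x. P x \<le> c * Q x) \<and> (\<exists>c>0. \<forall>x. Q x \<le> c * P x)"
    using algebra_norm.dominated_if_open_ball[OF P Q] algebra_norm.dominated_if_open_ball[OF Q P]
      algebra_norm.open_less[OF P] algebra_norm.open_less[OF Q]
    by blast
qed (blast intro: norm_open_transfer)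

definition closed_bounded_idempotent_disc ::
    "(complex \<Rightarrow> 'a::comm_ring_1 \<Rightarrow> 'a) \<Rightarrow> ('a \<Rightarrow> real) \<Rightarrow> 'a set \<Rightarrow> bool" where
  "closed_bounded_idempotent_disc sm N S \<longleftrightarrow>
     norm_closed N S \<and> idempotent_set S \<and> absolutely_convex sm S \<and> norm_bounded N S"

definition largest_idempotent_disc ::
    "(complex \<Rightarrow> 'a::comm_ring_1 \<Rightarrow> 'a) \<Rightarrow> ('a \<Rightarrow> real) \<Rightarrow> 'a set \<Rightarrow> bool" where
  "largest_idempotent_disc sm N B \<longleftrightarrow>
     closed_bounded_idempotent_disc sm N B \<and> (\<forall>S. closed_bounded_idempotent_disc sm N S \<longrightarrow> S \<subseteq> B)"

locale submult_norm = algebra_norm +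
  assumes mult_le: "P (x * y) \<le> P x * P y"
begin

lemma idempotent_atMost_one: "idempotent_set {y. P y \<le> 1}"
  unfolding idempotent_set_def using mult_le order_trans mult_le_one nonneg by fastforce

lemma closed_bounded_idempotent_disc_unit_ball:
  "closed_bounded_idempotent_disc sm P {y. P y \<le> 1}"
  unfolding closed_bounded_idempotent_disc_def norm_bounded_def
  using closed_atMost idempotent_atMost_one absolutely_convex_atMost by auto

end

lemma normed_algebra_iff_submult_norm: "normed_algebra sm N \<longleftrightarrow> submult_norm sm N"
  unfolding normed_algebra_def submult_norm_def submult_norm_axioms_def algebra_norm_def
    algebra_norm_axioms_def complex_alg_def
  by blast

lemma idempotent_set_power_mem:
  assumes "idempotent_set S" "x \<in> S"
  shows "x ^ Suc n \<in> S"
  using assms by (induction n) (auto simp: idempotent_set_def)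

lemma ex_less_power_power2:
  fixes a K :: real
  assumes "1 < a"
  shows "\<exists>n. K < a ^ 2 ^ n"
proof -
  obtain n where "K < a ^ n" using real_arch_pow[OF assms] by blast
  also have "a ^ n \<le> a ^ 2 ^ n"
    using assms by (intro power_increasing) (simp_all add: less_imp_le[OF less_exp])
  finally show ?thesis ..
qed

lemma square_mult_power_power2:
  fixes M :: "'a::monoid_mult \<Rightarrow> real"
  assumes "\<And>x. M (x * x) = (M x)\<^sup>2"
  shows "M (x ^ 2 ^ n) = M x ^ 2 ^ n"
proof (induction n)
  case (Suc n)
  have "x ^ 2 ^ Suc n = x ^ 2 ^ n * x ^ 2 ^ n" by (simp add: power_add[symmetric] mult_2)
  then show ?case using assms[of "x ^ 2 ^ n"] Suc by (simp add: power_mult[symmetric] mult.commute)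
qed simp

lemma square_mult_le_one_if_power2_bounded:
  fixes M :: "'a::monoid_mult \<Rightarrow> real"
  assumes "\<And>x. M (x * x) = (M x)\<^sup>2" and "\<And>n. M (x ^ 2 ^ n) \<le> K"
  shows "M x \<le> 1"
proof (rule ccontr)
  assume "\<not> M x \<le> 1"
  then obtain n where "K < M x ^ 2 ^ n" using ex_less_power_power2 by fastforce
  then show False using assms(2)[of n] square_mult_power_power2[of M x n, OF assms(1)] by linarith
qed

text \<open>Apply the bound to \<open>x ^ 2 ^ n\<close> and \<open>y ^ 2 ^ n\<close>: the constant D survives only as a
  \<open>2 ^ n\<close>-th root.\<close>

lemma square_mult_submultiplicative:
  fixes M :: "'a::comm_monoid_mult \<Rightarrow> real"
  assumes nonneg: "\<And>x. 0 \<le> M x" and sq: "\<And>x. M (x * x) = (M x)\<^sup>2"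
    and bounded: "\<And>x y. M (x * y) \<le> D * M x * M y"
  shows "M (x * y) \<le> M x * M y"
proof -
  have power2: "M (x * y) ^ 2 ^ n \<le> D * (M x * M y) ^ 2 ^ n" for n
  proof -
    have "M (x * y) ^ 2 ^ n = M (x ^ 2 ^ n * y ^ 2 ^ n)"
      by (simp only: power_mult_distrib[symmetric] square_mult_power_power2[where M = M, OF sq])
    also have "\<dots> \<le> D * M (x ^ 2 ^ n) * M (y ^ 2 ^ n)" by (rule bounded)
    finally show ?thesis
      by (simp add: square_mult_power_power2[where M = M, OF sq] power_mult_distrib mult.assoc)
  qed
  show ?thesis
  proof (cases "M x * M y = 0")
    case True
    then show ?thesis using power2[of 0] by (simp only: power_0 power_one_right mult_zero_right)
  next
    case False
    then have pos: "0 < M x * M y" using nonneg by (simp add: less_le)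
    have "M (x * y) / (M x * M y) \<le> 1"
    proof (rule ccontr)
      assume "\<not> ?thesis"
      then obtain n where "D < (M (x * y) / (M x * M y)) ^ 2 ^ n"
        using ex_less_power_power2 by fastforce
      moreover have "0 < (M x * M y) ^ 2 ^ n" using pos by simp
      ultimately show False using power2[of n] by (simp add: power_divide less_divide_eq)
    qed
    then show ?thesis using pos by (simp add: divide_le_eq)
  qed
qed

lemma uniform_norm_imp_largest_idempotent_disc:
  assumes N: "submult_norm sm N" and M: "uniform_norm sm M"
    and top: "\<forall>U. norm_open M U \<longleftrightarrow> norm_open N U"
  shows "largest_idempotent_disc sm N {x. M x \<le> 1}"
proof -
  interpret N: submult_norm sm N by (fact N)
  interpret M: algebra_norm sm M
    using M N.complex_alg_axioms unfolding uniform_norm_def algebra_norm_def algebra_norm_axioms_def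
    by blast
  have sq: "M (x * x) = (M x)\<^sup>2" for x using M unfolding uniform_norm_def by blast
  obtain c1 c2 where c: "c1 > 0" "c2 > 0" "\<And>x. N x \<le> c1 * M x" "\<And>x. M x \<le> c2 * N x"
    using top same_norm_topology_iff_equivalent[OF M.algebra_norm_axioms N.algebra_norm_axioms]
    by blast
  have "M (x * y) \<le> (c2 * c1 * c1) * M x * M y" for x y
  proof -
    have "M (x * y) \<le> c2 * (N x * N y)"
      using c(2) c(4)[of "x * y"] N.mult_le[of x y] by (meson mult_left_mono order_trans less_imp_le)
    also have "\<dots> \<le> c2 * ((c1 * M x) * (c1 * M y))"
      using c N.nonneg M.nonneg by (intro mult_left_mono mult_mono) auto
    finally show ?thesis by (simp add: mult_ac)
  qed
  then interpret M: submult_norm sm M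
    by unfold_locales (rule square_mult_submultiplicative[where M = M, OF M.nonneg sq])
  have closed: "norm_closed N {x. M x \<le> 1}"
    using M.closed_atMost top unfolding norm_closed_def by simp
  have "N x \<le> c1" if "M x \<le> 1" for x
    using c(1) c(3)[of x] that by (simp add: mult_le_cancel_left1 order_trans)
  then have bounded: "norm_bounded N {x. M x \<le> 1}"
    unfolding norm_bounded_def by blast
  have largest: "S \<subseteq> {x. M x \<le> 1}" if S: "closed_bounded_idempotent_disc sm N S" for S
  proof
    fix x assume "x \<in> S"
    obtain C where C: "\<And>z. z \<in> S \<Longrightarrow> N z \<le> C"
      using S unfolding closed_bounded_idempotent_disc_def norm_bounded_def by blast
    have "M (x ^ 2 ^ n) \<le> c2 * C" for n
    proof -
      have "x ^ 2 ^ n \<in> S"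
        using idempotent_set_power_mem[of S x "2 ^ n - 1"] S \<open>x \<in> S\<close>
        unfolding closed_bounded_idempotent_disc_def by simp
      then have "c2 * N (x ^ 2 ^ n) \<le> c2 * C" using c(2) C by simp
      then show ?thesis using c(4)[of "x ^ 2 ^ n"] by linarith
    qed
    then show "x \<in> {x. M x \<le> 1}"
      using square_mult_le_one_if_power2_bounded[where M = M, OF sq] by blast
  qed
  show ?thesis
    using M.closed_bounded_idempotent_disc_unit_ball closed bounded largest
    unfolding largest_idempotent_disc_def closed_bounded_idempotent_disc_def by blast
qed

definition norm_closure :: "('a::comm_ring_1 \<Rightarrow> real) \<Rightarrow> 'a set \<Rightarrow> 'a set" where
  "norm_closure N S = {z. \<forall>e>0. \<exists>h\<in>S. N (z - h) < e}"

lemma mem_norm_closure_iff: "z \<in> norm_closure N S \<longleftrightarrow> (\<forall>e>0. \<exists>h\<in>S. N (z - h) < e)"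
  by (simp add: norm_closure_def)

context algebra_norm
begin

lemma subset_norm_closure: "S \<subseteq> norm_closure P S"
  unfolding norm_closure_def by force

lemma norm_closed_norm_closure: "norm_closed P (norm_closure P S)"
  unfolding norm_closed_def norm_open_def
proof
  fix z assume "z \<in> - norm_closure P S"
  then obtain e where e: "e > 0" "\<And>h. h \<in> S \<Longrightarrow> e \<le> P (z - h)"
    unfolding norm_closure_def by (auto simp: not_less)
  have "y \<notin> norm_closure P S" if y: "P (y - z) < e / 2" for y
  proof
    assume "y \<in> norm_closure P S"
    moreover have "e / 2 > 0" using e(1) by simp
    ultimately obtain h where h: "h \<in> S" "P (y - h) < e / 2"
      by (meson mem_norm_closure_iff)
    have "P (z - h) \<le> P (z - y) + P (y - h)"
      using triangle[of "z - y" "y - h"] by simp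
    then show False using e(2)[OF h(1)] h(2) y minus_commute[of z y] by linarith
  qed
  then show "\<exists>e>0. \<forall>y. P (y - z) < e \<longrightarrow> y \<in> - norm_closure P S"
    using e(1) by (intro exI[of _ "e / 2"]) auto
qed

lemma absolutely_convex_norm_closure:
  assumes "absolutely_convex sm S"
  shows "absolutely_convex sm (norm_closure P S)"
  unfolding absolutely_convex_def
proof (intro ballI allI impI)
  fix z z' a b
  assume z: "z \<in> norm_closure P S" "z' \<in> norm_closure P S" and ab: "cmod a + cmod b \<le> 1"
  have "\<exists>h\<in>S. P (sm a z + sm b z' - h) < e" if e: "e > 0" for e
  proof -
    have "e / 2 > 0" using e by simp
    then obtain h h' where h: "h \<in> S" "P (z - h) < e / 2" "h' \<in> S" "P (z' - h') < e / 2"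
      using z by (meson mem_norm_closure_iff)
    have "sm a z + sm b z' - (sm a h + sm b h') = sm a (z - h) + sm b (z' - h')"
      by (simp add: scale_diff_right algebra_simps)
    then have "P (sm a z + sm b z' - (sm a h + sm b h')) \<le> cmod a * P (z - h) + cmod b * P (z' - h')"
      using triangle[of "sm a (z - h)" "sm b (z' - h')"] by (simp add: scale)
    also have "\<dots> \<le> cmod a * (e / 2) + cmod b * (e / 2)"
      using h by (intro add_mono mult_left_mono) auto
    also have "\<dots> = (cmod a + cmod b) * (e / 2)" by (simp add: distrib_right)
    also have "\<dots> < e" using ab e by (simp add: mult_left_le_one_le)
    finally show ?thesis
      using assms h unfolding absolutely_convex_def by (meson ab)
  qed
  then show "sm a z + sm b z' \<in> norm_closure P S" unfolding norm_closure_def by blast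
qed

lemma norm_bounded_norm_closure:
  assumes "norm_bounded P S"
  shows "norm_bounded P (norm_closure P S)"
proof -
  obtain C where C: "\<And>x. x \<in> S \<Longrightarrow> P x \<le> C" using assms unfolding norm_bounded_def by blast
  have "P z \<le> C + 1" if z: "z \<in> norm_closure P S" for z
  proof -
    obtain h where "h \<in> S" "P (z - h) < 1" using z unfolding mem_norm_closure_iff by (meson zero_less_one)
    then show ?thesis using C triangle_diff[where x = h and y = z] by force
  qed
  then show ?thesis unfolding norm_bounded_def by blast
qed

end

context submult_norm
begin

lemma idempotent_norm_closure:
  assumes "idempotent_set S"
  shows "idempotent_set (norm_closure P S)"
  unfolding idempotent_set_def
proof (intro ballI)
  fix z z' assume z: "z \<in> norm_closure P S" "z' \<in> norm_closure P S"
  have "\<exists>h\<in>S. P (z * z' - h) < e" if e: "e > 0" for e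
  proof -
    define R where "R = P z + P z' + 1"
    have R: "R \<ge> 1" using nonneg[of z] nonneg[of z'] by (simp add: R_def)
    define d where "d = min 1 (e / (2 * R))"
    have d: "0 < d" "d \<le> 1" "d * R \<le> e / 2"
      using e R by (auto simp: d_def min_def field_simps)
    obtain h h' where h: "h \<in> S" "P (z - h) < d" "h' \<in> S" "P (z' - h') < d"
      using z d(1) by (meson mem_norm_closure_iff)
    have "z * z' - h * h' = (z - h) * z' + h * (z' - h')" by (simp add: algebra_simps)
    then have "P (z * z' - h * h') \<le> P (z - h) * P z' + P h * P (z' - h')"
      by (metis add_mono mult_le order_trans triangle)
    also have "\<dots> \<le> d * P z' + (P z + d) * d"
    proof (intro add_mono mult_mono)
      show "P h \<le> P z + d"
        using triangle_diff[where x = z and y = h] minus_commute[of h z] h(2) by linarith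
    qed (use h nonneg d in auto)
    also have "\<dots> \<le> d * R" using d unfolding R_def by (simp add: algebra_simps)
    finally have "P (z * z' - h * h') < e" using d e by linarith
    then show ?thesis using assms h unfolding idempotent_set_def by blast
  qed
  then show "z * z' \<in> norm_closure P S" unfolding norm_closure_def by blast
qed

lemma closed_bounded_idempotent_disc_norm_closure:
  assumes "idempotent_set S" "absolutely_convex sm S" "norm_bounded P S"
  shows "closed_bounded_idempotent_disc sm P (norm_closure P S)"
  unfolding closed_bounded_idempotent_disc_def
  using assms norm_closed_norm_closure idempotent_norm_closure absolutely_convex_norm_closure
    norm_bounded_norm_closure
  by blast

end

inductive_set power_disc :: "(complex \<Rightarrow> 'a \<Rightarrow> 'a) \<Rightarrow> 'a::comm_ring_1 \<Rightarrow> 'a set"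
  for sm y where
  power: "y ^ Suc n \<in> power_disc sm y"
| combination: "\<lbrakk>z \<in> power_disc sm y; w \<in> power_disc sm y; cmod a + cmod b \<le> 1\<rbrakk>
    \<Longrightarrow> sm a z + sm b w \<in> power_disc sm y"

lemma absolutely_convex_power_disc: "absolutely_convex sm (power_disc sm y)"
  unfolding absolutely_convex_def using power_disc.combination by blast

lemma (in complex_alg) idempotent_power_disc: "idempotent_set (power_disc sm y)"
  unfolding idempotent_set_def
proof (intro ballI)
  fix z w assume z: "z \<in> power_disc sm y" and w: "w \<in> power_disc sm y"
  from z show "z * w \<in> power_disc sm y"
  proof induction
    case (power n)
    from w show ?case
    proof induction
      case (power m)
      have "y ^ Suc n * y ^ Suc m = y ^ Suc (Suc (n + m))" by (simp add: power_add mult_ac)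
      then show ?case by (metis power_disc.power)
    next
      case (combination z1 z2 a b)
      then show ?case
        by (simp add: distrib_left scale_mult_right power_disc.combination)
    qed
  next
    case (combination z1 z2 a b)
    then show ?case
      by (simp add: distrib_right scale_mult_left power_disc.combination)
  qed
qed

lemma (in algebra_norm) power_disc_bounded:
  assumes "\<And>n. P (y ^ Suc n) \<le> K" and "z \<in> power_disc sm y"
  shows "P z \<le> K"
  using assms(2)
proof induction
  case (combination z w a b)
  have "P (sm a z + sm b w) \<le> cmod a * P z + cmod b * P w"
    using triangle[of "sm a z" "sm b w"] by (simp add: scale)
  also have "\<dots> \<le> (cmod a + cmod b) * K"
    using combination by (simp add: distrib_right add_mono mult_left_mono)
  also have "\<dots> \<le> K"
    using combination assms(1)[of 0] nonneg[of y] by (simp add: mult_left_le_one_le)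
  finally show ?case .
qed (rule assms(1))

context submult_norm
begin

lemma power_bounded_if_square_powers_bounded:
  assumes C: "\<And>k. P ((y * y) ^ Suc k) \<le> C"
  shows "P (y ^ Suc n) \<le> P y + C + P y * C"
proof -
  have C0: "0 \<le> C" using C[of 0] nonneg order_trans by blast
  have yC: "0 \<le> P y * C" using C0 nonneg by simp
  have "\<exists>k. n = 2 * k \<or> n = Suc (2 * k)" by presburger
  then obtain k where "n = 2 * k \<or> n = Suc (2 * k)" by blast
  then show ?thesis
  proof
    assume "n = Suc (2 * k)"
    then have "Suc n = 2 * Suc k" by simp
    then have "y ^ Suc n = (y ^ 2) ^ Suc k" by (simp only: power_mult)
    then have "y ^ Suc n = (y * y) ^ Suc k" by (simp add: power2_eq_square)
    then show ?thesis using C[of k] nonneg[of y] yC by simp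
  next
    assume n: "n = 2 * k"
    show ?thesis
    proof (cases k)
      case 0
      then show ?thesis using n C0 yC by simp
    next
      case (Suc j)
      then have "y ^ Suc n = y * (y ^ 2) ^ Suc j"
        unfolding n power_Suc[of y] power_mult by simp
      then have "y ^ Suc n = y * (y * y) ^ Suc j" by (simp add: power2_eq_square)
      then have "P (y ^ Suc n) \<le> P y * C"
        using mult_le[of y] C[of j] nonneg[of y] by (metis mult_left_mono order_trans)
      then show ?thesis using C0 nonneg[of y] by simp
    qed
  qed
qed

lemma largest_idempotent_disc_square_mem:
  assumes B: "largest_idempotent_disc sm P B" and yy: "y * y \<in> B"
  shows "y \<in> B"
proof -
  have idB: "idempotent_set B" and bdB: "norm_bounded P B"
    and lg: "\<And>S. closed_bounded_idempotent_disc sm P S \<Longrightarrow> S \<subseteq> B"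
    using B unfolding largest_idempotent_disc_def closed_bounded_idempotent_disc_def by blast+
  obtain C where C: "\<And>z. z \<in> B \<Longrightarrow> P z \<le> C" using bdB unfolding norm_bounded_def by blast
  have "P (y ^ Suc n) \<le> P y + C + P y * C" for n
    by (intro power_bounded_if_square_powers_bounded C idempotent_set_power_mem[OF idB yy])
  then have "norm_bounded P (power_disc sm y)"
    unfolding norm_bounded_def using power_disc_bounded by blast
  then have "norm_closure P (power_disc sm y) \<subseteq> B"
    using lg closed_bounded_idempotent_disc_norm_closure idempotent_power_disc
      absolutely_convex_power_disc by blast
  moreover have "y \<in> power_disc sm y" using power_disc.power[of y 0] by simp
  ultimately show ?thesis using subset_norm_closure by blast
qed

end

definition gauge :: "(complex \<Rightarrow> 'a::comm_ring_1 \<Rightarrow> 'a) \<Rightarrow> 'a set \<Rightarrow> 'a \<Rightarrow> real" where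
  "gauge sm B x = Inf {t. 0 < t \<and> sm (of_real (1 / t)) x \<in> B}"

locale gauge_disc = algebra_norm +
  fixes B :: "'a::comm_ring_1 set" and C :: real
  assumes disc: "absolutely_convex sm B"
    and unit_ball_subset: "{x. P x \<le> 1} \<subseteq> B"
    and bounded: "\<And>z. z \<in> B \<Longrightarrow> P z \<le> C"
begin

lemma norm_scale_inverse: "0 < t \<Longrightarrow> P (sm (of_real (1 / t)) x) = P x / t"
  using scale_of_real[of "1 / t" x] by simp

lemma one_le_bound: "1 \<le> C"
proof -
  have "P 1 \<noteq> 0" using eq_0_iff[of 1] by simp
  then have "P 1 > 0" using nonneg[of 1] by linarith
  then have norm_one: "P (sm (of_real (1 / P 1)) 1) = 1" by (simp only: norm_scale_inverse) simp
  then have "sm (of_real (1 / P 1)) 1 \<in> B" using unit_ball_subset by force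
  then show ?thesis using bounded norm_one by fastforce
qed

lemma scale_mem: "z \<in> B \<Longrightarrow> cmod a \<le> 1 \<Longrightarrow> sm a z \<in> B"
  using disc scale_zero_left[of z] unfolding absolutely_convex_def
  by (metis add.right_neutral norm_zero)

lemma scale_inverse_mem_if_norm_le:
  assumes "0 < t" "P x \<le> t"
  shows "sm (of_real (1 / t)) x \<in> B"
proof -
  have "P (sm (of_real (1 / t)) x) \<le> 1" using assms by (simp only: norm_scale_inverse) simp
  then show ?thesis using unit_ball_subset by blast
qed

lemma gauge_set_nonempty: "{t. 0 < t \<and> sm (of_real (1 / t)) x \<in> B} \<noteq> {}"
proof -
  have "0 < P x + 1" using nonneg[of x] by linarith
  then have "P x + 1 \<in> {t. 0 < t \<and> sm (of_real (1 / t)) x \<in> B}"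
    using scale_inverse_mem_if_norm_le[of "P x + 1" x] by simp
  then show ?thesis by blast
qed

lemma gauge_set_bdd_below: "bdd_below {t. 0 < t \<and> sm (of_real (1 / t)) x \<in> B}"
  by (rule bdd_belowI[of _ 0]) auto

lemma gauge_nonneg: "0 \<le> gauge sm B x"
  unfolding gauge_def by (rule cInf_greatest[OF gauge_set_nonempty]) auto

lemma gauge_le: "0 < t \<Longrightarrow> sm (of_real (1 / t)) x \<in> B \<Longrightarrow> gauge sm B x \<le> t"
  unfolding gauge_def by (rule cInf_lower[OF _ gauge_set_bdd_below]) simp

lemma scale_inverse_mem_if_gauge_less:
  assumes "gauge sm B x < t"
  shows "sm (of_real (1 / t)) x \<in> B"
proof -
  obtain s where s: "0 < s" "sm (of_real (1 / s)) x \<in> B" "s < t"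
    using assms cInf_less_iff[OF gauge_set_nonempty gauge_set_bdd_below] unfolding gauge_def
    by auto
  have "cmod (of_real (s / t)) \<le> 1" using s by (simp add: norm_divide)
  then have "sm (of_real (s / t)) (sm (of_real (1 / s)) x) \<in> B" by (rule scale_mem[OF s(2)])
  moreover have "s / t * (1 / s) = 1 / t" using s(1) by simp
  ultimately show ?thesis by (metis scale_scale of_real_mult)
qed

lemma gauge_le_norm: "gauge sm B x \<le> P x"
proof (rule dense_ge)
  fix t assume "P x < t"
  then show "gauge sm B x \<le> t"
    using nonneg[of x] by (intro gauge_le scale_inverse_mem_if_norm_le) auto
qed

lemma norm_le_gauge: "P x \<le> C * gauge sm B x"
proof -
  have "P x / C \<le> gauge sm B x"
  proof (rule dense_ge)
    fix t assume t: "gauge sm B x < t"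
    then have "0 < t" using gauge_nonneg[of x] by linarith
    then have "P x / t \<le> C"
      using bounded[OF scale_inverse_mem_if_gauge_less[OF t]] by (simp only: norm_scale_inverse)
    then show "P x / C \<le> t" using \<open>0 < t\<close> one_le_bound by (simp add: field_simps)
  qed
  then show ?thesis using one_le_bound by (simp add: field_simps)
qed

lemma gauge_eq_0_iff: "gauge sm B x = 0 \<longleftrightarrow> x = 0"
  using gauge_le_norm[of x] gauge_nonneg[of x] norm_le_gauge[of x] eq_0_iff[of x] nonneg[of x]
  by (metis mult_zero_right order_antisym)

lemma gauge_triangle: "gauge sm B (x + y) \<le> gauge sm B x + gauge sm B y"
proof (rule dense_ge)
  fix z assume z: "gauge sm B x + gauge sm B y < z"
  define t s where "t = gauge sm B x + (z - gauge sm B x - gauge sm B y) / 2"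
    and "s = gauge sm B y + (z - gauge sm B x - gauge sm B y) / 2"
  have ts: "gauge sm B x < t" "gauge sm B y < s" "t + s = z"
    using z by (auto simp: t_def s_def)
  then have pos: "0 < t" "0 < s" "0 < z" using gauge_nonneg[of x] gauge_nonneg[of y] by linarith+
  have "cmod (of_real (t / z)) + cmod (of_real (s / z)) \<le> 1"
    using pos ts(3) by (simp add: norm_divide add_divide_distrib[symmetric])
  then have "sm (of_real (t / z)) (sm (of_real (1 / t)) x)
      + sm (of_real (s / z)) (sm (of_real (1 / s)) y) \<in> B"
    using disc scale_inverse_mem_if_gauge_less[OF ts(1)] scale_inverse_mem_if_gauge_less[OF ts(2)]
    unfolding absolutely_convex_def by blast
  then have "sm (of_real (1 / z)) (x + y) \<in> B"
    using pos by (simp add: scale_scale scale_add_right)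
  then show "gauge sm B (x + y) \<le> z" using pos by (intro gauge_le)
qed

lemma gauge_scale_le: "gauge sm B (sm a x) \<le> cmod a * gauge sm B x"
proof (cases "a = 0")
  case True
  then show ?thesis using gauge_eq_0_iff[of 0] by (simp add: scale_zero_left)
next
  case False
  show ?thesis
  proof (rule dense_ge)
    fix z assume z: "cmod a * gauge sm B x < z"
    define t where "t = z / cmod a"
    have "0 \<le> cmod a * gauge sm B x" by (simp add: gauge_nonneg)
    then have t: "gauge sm B x < t" "0 < z" "0 < t"
      using z False by (auto simp: t_def field_simps)
    have "cmod (of_real (1 / z) * a * of_real t) = 1"
      using t False by (simp add: t_def norm_mult norm_divide)
    then have "sm (of_real (1 / z) * a * of_real t) (sm (of_real (1 / t)) x) \<in> B"
      using scale_mem[OF scale_inverse_mem_if_gauge_less[OF t(1)]] by simp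
    then have "sm (of_real (1 / z)) (sm a x) \<in> B"
      using t(3) by (simp add: scale_scale mult.commute)
    then show "gauge sm B (sm a x) \<le> z" using t(2) by (intro gauge_le)
  qed
qed

lemma gauge_scale: "gauge sm B (sm a x) = cmod a * gauge sm B x"
proof (cases "a = 0")
  case True
  then show ?thesis using gauge_eq_0_iff by (simp add: scale_zero_left)
next
  case False
  have "gauge sm B x \<le> cmod (1 / a) * gauge sm B (sm a x)"
    using gauge_scale_le[of "1 / a" "sm a x"] False by (simp add: scale_scale scale_one)
  then have "cmod a * gauge sm B x \<le> gauge sm B (sm a x)"
    using False by (simp add: norm_divide field_simps)
  then show ?thesis using gauge_scale_le[of a x] by simp
qed

lemma algebra_norm_gauge: "algebra_norm sm (gauge sm B)"
  by (rule algebra_norm.intro[OF complex_alg_axioms])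
    (simp add: algebra_norm_axioms_def vs_norm_def gauge_nonneg gauge_eq_0_iff gauge_triangle gauge_scale)

lemma same_norm_topology_gauge: "norm_open (gauge sm B) U \<longleftrightarrow> norm_open P U"
proof -
  have "\<exists>c>0. \<forall>x. gauge sm B x \<le> c * P x"
    using gauge_le_norm by (intro exI[of _ 1]) simp
  moreover have "\<exists>c>0. \<forall>x. P x \<le> c * gauge sm B x"
    using norm_le_gauge one_le_bound by (intro exI[of _ C]) auto
  ultimately show ?thesis
    using same_norm_topology_iff_equivalent[OF algebra_norm_gauge algebra_norm_axioms] by blast
qed

lemma gauge_mult_self:
  assumes "idempotent_set B" and sqrt_mem: "\<And>y. y * y \<in> B \<Longrightarrow> y \<in> B"
  shows "gauge sm B (x * x) = (gauge sm B x)\<^sup>2"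
proof (rule antisym)
  show "gauge sm B (x * x) \<le> (gauge sm B x)\<^sup>2"
  proof (rule dense_ge)
    fix s assume s: "(gauge sm B x)\<^sup>2 < s"
    define t where "t = sqrt s"
    have "0 < s" using s by (metis zero_le_power2 le_less_trans)
    then have t: "gauge sm B x < t" "0 < t"
      using s gauge_nonneg[of x] real_less_rsqrt by (auto simp: t_def)
    have "sm (of_real (1 / t)) x * sm (of_real (1 / t)) x \<in> B"
      using assms(1) scale_inverse_mem_if_gauge_less[OF t(1)] unfolding idempotent_set_def by blast
    then have "sm (of_real (1 / s)) (x * x) \<in> B"
      using t by (simp add: scale_mult_scale t_def flip: of_real_mult)
    then show "gauge sm B (x * x) \<le> s" using t by (intro gauge_le) (auto simp: t_def)
  qed
next
  show "(gauge sm B x)\<^sup>2 \<le> gauge sm B (x * x)"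
  proof -
    have "gauge sm B x \<le> t" if t: "sqrt (gauge sm B (x * x)) < t" for t
    proof -
      have pos: "0 < t" using t gauge_nonneg[of "x * x"] by (meson le_less_trans real_sqrt_ge_zero)
      have "(sqrt (gauge sm B (x * x)))\<^sup>2 < t\<^sup>2"
        using t gauge_nonneg by (intro power_strict_mono) auto
      then have "gauge sm B (x * x) < t * t" using gauge_nonneg[of "x * x"] by (simp add: power2_eq_square)
      then have "sm (of_real (1 / (t * t))) (x * x) \<in> B" by (rule scale_inverse_mem_if_gauge_less)
      then have "sm (of_real (1 / t)) x * sm (of_real (1 / t)) x \<in> B"
        by (simp add: scale_mult_scale)
      then show ?thesis using pos sqrt_mem by (intro gauge_le)
    qed
    then have "gauge sm B x \<le> sqrt (gauge sm B (x * x))" by (rule dense_ge)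
    then show ?thesis using gauge_nonneg by (metis power_mono real_sqrt_pow2)
  qed
qed

end

lemma (in submult_norm) largest_idempotent_disc_imp_uniform_norm:
  assumes B: "largest_idempotent_disc sm P B"
  shows "uniform_norm sm (gauge sm B) \<and> (\<forall>U. norm_open (gauge sm B) U \<longleftrightarrow> norm_open P U)"
proof -
  have "closed_bounded_idempotent_disc sm P B" and ball: "{x. P x \<le> 1} \<subseteq> B"
    using B closed_bounded_idempotent_disc_unit_ball unfolding largest_idempotent_disc_def by auto
  then have disc: "absolutely_convex sm B" and idem: "idempotent_set B" and "norm_bounded P B"
    unfolding closed_bounded_idempotent_disc_def by auto
  then obtain C where "\<And>z. z \<in> B \<Longrightarrow> P z \<le> C" unfolding norm_bounded_def by blast
  then interpret gauge_disc sm P B C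
    using disc ball by unfold_locales auto
  have "gauge sm B (x * x) = (gauge sm B x)\<^sup>2" for x
    using idem largest_idempotent_disc_square_mem[OF B] by (rule gauge_mult_self)
  then show ?thesis
    using algebra_norm.vs_norm[OF algebra_norm_gauge] same_norm_topology_gauge
    unfolding uniform_norm_def by blast
qed

theorem theorem3p3:
  fixes sm :: "complex \<Rightarrow> 'a::comm_ring_1 \<Rightarrow> 'a" and N :: "'a \<Rightarrow> real"
  assumes "normed_algebra sm N"
    and "functionally_continuous sm N"
  shows "(\<exists>M. uniform_norm sm M \<and> (\<forall>U. norm_open M U \<longleftrightarrow> norm_open N U))
     \<longleftrightarrow> (\<exists>B. norm_closed N B \<and> idempotent_set B \<and> absolutely_convex sm B \<and> norm_bounded N B \<and>
            (\<forall>S. norm_closed N S \<and> idempotent_set S \<and> absolutely_convex sm S \<and> norm_bounded N S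
                 \<longrightarrow> S \<subseteq> B))"
proof -
  interpret N: submult_norm sm N
    using assms(1) normed_algebra_iff_submult_norm by blast
  have "(\<exists>M. uniform_norm sm M \<and> (\<forall>U. norm_open M U \<longleftrightarrow> norm_open N U))
      \<longleftrightarrow> (\<exists>B. largest_idempotent_disc sm N B)"
  proof
    assume "\<exists>M. uniform_norm sm M \<and> (\<forall>U. norm_open M U \<longleftrightarrow> norm_open N U)"
    then obtain M where "uniform_norm sm M" "\<forall>U. norm_open M U \<longleftrightarrow> norm_open N U" by blast
    then show "\<exists>B. largest_idempotent_disc sm N B"
      using uniform_norm_imp_largest_idempotent_disc[OF N.submult_norm_axioms] by blast
  next
    assume "\<exists>B. largest_idempotent_disc sm N B"
    then obtain B where "largest_idempotent_disc sm N B" by blast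
    then show "\<exists>M. uniform_norm sm M \<and> (\<forall>U. norm_open M U \<longleftrightarrow> norm_open N U)"
      using N.largest_idempotent_disc_imp_uniform_norm by blast
  qed
  then show ?thesis
    unfolding largest_idempotent_disc_def closed_bounded_idempotent_disc_def by (simp only: conj_assoc)
qed

end
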